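(* With $g_n$, $C_t$, $D_t$ as in the context, for every $t\ge1$: \[g_{2t+1}(t)=\frac12+\frac{D_t}{2C_t},\qquad g_{2t}(t)=1-\frac{D_t}{C_t},\qquad g_{2t}(t-1)=\frac{2D_t}{C_t},\] and in particular $g_{2t}(t-1)+g_{2t}(t)=1+D_t/C_t$.
   Context: Let $\mathcal X=\{A,B,C,D\}$ and let $(X_i)_{i\ge1}$ be the first-order Markov chain on $\mathcal X$ with $\mathbb P(X_1=x)=1/4$ for all $x$ and transitions: from $A$ to $A$ or $C$ w.p. $1/2$ each; from $B$ to $B$ or $D$ w.p. $1/2$ each; from $C$ and from $D$ to each of $A,B,C,D$ w.p. $1/4$. A nonempty string is admissible if all consecutive transitions have positive probability; $\mathcal A$ is the set of admissible nonempty strings; $K(u):=-\log_2\mathbb P(X_1^m=u)$ for $u=x_1^m\in\mathcal A$. Shortlex source code $C$: order nonempty binary strings by length then lexicographically as $b_1,b_2,\dots$; order $\mathcal A$ as $u_1,u_2,\dots$ by increasing $K$, then increasing length, then lexicographically with $A<B<C<D$; set $C(u_j):=b_j$. Let $K_n:=K(X_1^n)$, $L_n:=|C(X_1^n)|$, $I_n:=\mathbf 1\{L_n=K_n-1\}$, $X:=\#\{i\in\{1,\dots,n-1\}:X_i\in\{C,D\}\}$, and $g_n(x):=\mathbb P(I_n=1\mid X=x)$. For integers $m,j$ let $U(m,j):=\binom{m-j}{j}2^j$ if $0\le j$, $2j\le m$, else $0$; $C_t:=\binom{2t}{t}2^t$; $D_t:=\sum_{j=0}^{t-1}U(3t,j)-\sum_{j\ge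 t+1}U(3t,j)$. *)

theory Defs
  imports Complex_Main
begin

datatype letter = LA | LB | LC | LD

definition idx :: "letter \<Rightarrow> nat" where
  "idx x = (case x of LA \<Rightarrow> 0 | LB \<Rightarrow> 1 | LC \<Rightarrow> 2 | LD \<Rightarrow> 3)"

definition trans :: "letter \<Rightarrow> letter \<Rightarrow> real" where
  "trans x y = (case x of
       LA \<Rightarrow> (if y = LA \<or> y = LC then 1/2 else 0)
     | LB \<Rightarrow> (if y = LB \<or> y = LD then 1/2 else 0)
     | LC \<Rightarrow> 1/4
     | LD \<Rightarrow> 1/4)"

fun path_prob :: "letter \<Rightarrow> letter list \<Rightarrow> real" where
  "path_prob x [] = 1"
| "path_prob x (y # ys) = trans x y * path_prob y ys"

text \<open>P(X_1^m = u), with the uniform initial distribution.\<close>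
fun seq_prob :: "letter list \<Rightarrow> real" where
  "seq_prob [] = 1"
| "seq_prob (x # xs) = 1/4 * path_prob x xs"

definition admissible :: "letter list \<Rightarrow> bool" where
  "admissible u \<longleftrightarrow> u \<noteq> [] \<and> (\<forall>i. Suc i < length u \<longrightarrow> trans (u ! i) (u ! Suc i) > 0)"

definition Kc :: "letter list \<Rightarrow> real" where
  "Kc u = - log 2 (seq_prob u)"

definition aprec :: "letter list \<Rightarrow> letter list \<Rightarrow> bool" where
  "aprec v u \<longleftrightarrow> Kc v < Kc u \<or>
     (Kc v = Kc u \<and> (length v < length u \<or>
       (length v = length u \<and> (map idx v, map idx u) \<in> lexord {(a, b). a < b})))"

text \<open>0-based position of u in the enumeration u_1, u_2, ... (so u = u_(arank u + 1)).\<close>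
definition arank :: "letter list \<Rightarrow> nat" where
  "arank u = card {v. admissible v \<and> aprec v u}"

text \<open>Shortlex order on nonempty binary strings (0 = False < 1 = True).\<close>
definition bprec :: "bool list \<Rightarrow> bool list \<Rightarrow> bool" where
  "bprec v w \<longleftrightarrow> length v < length w \<or>
     (length v = length w \<and> (v, w) \<in> lexord {(a, b). a < b})"

definition brank :: "bool list \<Rightarrow> nat" where
  "brank w = card {v. v \<noteq> [] \<and> bprec v w}"

text \<open>Shortlex source code: C(u_j) = b_j.\<close>
definition code :: "letter list \<Rightarrow> bool list" where
  "code u = (THE w. w \<noteq> [] \<and> brank w = arank u)"

definition isCD :: "letter \<Rightarrow> bool" where
  "isCD x \<longleftrightarrow> x = LC \<or> x = LD"

definition Xcount :: "letter list \<Rightarrow> nat" where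
  "Xcount u = length (filter isCD (butlast u))"

definition Iev :: "letter list \<Rightarrow> bool" where
  "Iev u \<longleftrightarrow> real (length (code u)) = Kc u - 1"

text \<open>g_n(x) = P(I_n = 1 | X = x).\<close>
definition g :: "nat \<Rightarrow> nat \<Rightarrow> real" where
  "g n x = (\<Sum>u\<in>{u. length u = n \<and> Xcount u = x \<and> Iev u}. seq_prob u) /
           (\<Sum>u\<in>{u. length u = n \<and> Xcount u = x}. seq_prob u)"

definition U :: "nat \<Rightarrow> nat \<Rightarrow> real" where
  "U m j = (if 2 * j \<le> m then real ((m - j) choose j) * 2 ^ j else 0)"

definition Ct :: "nat \<Rightarrow> real" where
  "Ct t = real ((2 * t) choose t) * 2 ^ t"

text \<open>U(3t,j) = 0 for j > 3t, so the second sum is finite.\<close>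
definition Dt :: "nat \<Rightarrow> real" where
  "Dt t = (\<Sum>j<t. U (3 * t) j) - (\<Sum>j\<in>{t+1..3*t}. U (3 * t) j)"

end

theory Submission
  imports Defs "HOL-Library.Discrete_Functions"
begin

text \<open>An admissible string of length \<open>n\<close> with \<open>X = x\<close> has probability \<open>2^-(n+1+x)\<close>,
  so \<open>K\<close> is an integer and the class of strings with given \<open>n\<close> and \<open>x\<close> is a block of
  consecutive strings in the enumeration: it follows all strings of smaller \<open>K\<close> and the
  shorter strings of equal \<open>K\<close>, and there are \<open>4 U(m,x)\<close> strings with \<open>K = m + 2\<close> and
  \<open>X = x\<close>. The shortlex codeword of the string of rank \<open>r\<close> (counted from 0) has length
  \<open>floor(log2(r + 2))\<close>, so \<open>I = 1\<close> holds exactly for the members of the class with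
  \<open>r + 2 < 2^K\<close>. Counting them expresses \<open>g\<close> through \<open>W(m) = \<Sum>_j U(m,j)\<close> (\<open>Usum\<close>) and
  \<open>G(m,a) = \<Sum>_{j\<ge>a} U(m,j)\<close> (\<open>Utail\<close>), provided the count lies between 0 and the class size.
  For the three classes at hand, the recurrence \<open>U(m+2,j+1) = U(m+1,j+1) + 2 U(m,j)\<close> and
  the identity \<open>G(n+t,t) + G(n+t+1,t) = 2^t \<Sum>_{i\<ge>t} C(n+1,i)\<close> turn the counts into
  expressions in \<open>C_t\<close> and \<open>D_t\<close>. The bounds \<open>0 \<le> 2 D_t \<le> C_t\<close> follow because
  \<open>D_t\<close> is an alternating sum \<open>W(N) - 2 G(N,t)\<close>, and the sums of two consecutive
  such terms are nonnegative and nondecreasing in \<open>N\<close> (they are middle binomial sums).\<close>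

section \<open>The numbers \<open>U(m,j)\<close>\<close>

lemma U_eq: "U m j = real ((m - j) choose j) * 2 ^ j"
  unfolding U_def by (auto simp: binomial_eq_0)

lemma U_eq_0: "m < 2 * j \<Longrightarrow> U m j = 0"
  unfolding U_def by simp

lemma U_0 [simp]: "U m 0 = 1"
  unfolding U_def by simp

lemma U_nonneg: "U m j \<ge> 0"
  unfolding U_def by simp

lemma U_Suc_Suc: "U (Suc (Suc m)) (Suc j) = U (Suc m) (Suc j) + 2 * U m j"
proof (cases "j \<le> m")
  case True
  then have "Suc (Suc m) - Suc j = Suc (m - j)" "Suc m - Suc j = m - j" by auto
  then show ?thesis unfolding U_eq by (simp add: algebra_simps)
next
  case False
  then show ?thesis by (simp add: U_eq_0)
qed

lemma sum_U_extend:
  assumes "m \<le> N"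
  shows "(\<Sum>j\<le>N. f j * U m j) = (\<Sum>j\<le>m. f j * U m j)"
  by (rule sum.mono_neutral_right) (use assms in \<open>auto simp: U_eq_0\<close>)

lemma sum_U_Suc_Suc:
  "(\<Sum>j\<le>Suc (Suc m). f j * U (Suc (Suc m)) j)
   = (\<Sum>j\<le>Suc m. f j * U (Suc m) j) + 2 * (\<Sum>j\<le>m. f (Suc j) * U m j)"
proof -
  have "(\<Sum>j\<le>Suc (Suc m). f j * U (Suc (Suc m)) j)
      = f 0 + (\<Sum>j\<le>Suc m. f (Suc j) * U (Suc m) (Suc j))
        + 2 * (\<Sum>j\<le>Suc m. f (Suc j) * U m j)"
    by (simp add: sum.atMost_Suc_shift U_Suc_Suc algebra_simps sum.distrib sum_distrib_left
             del: sum.atMost_Suc)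
  also have "f 0 + (\<Sum>j\<le>Suc m. f (Suc j) * U (Suc m) (Suc j))
      = (\<Sum>j\<le>Suc (Suc m). f j * U (Suc m) j)"
    by (simp add: sum.atMost_Suc_shift del: sum.atMost_Suc)
  finally show ?thesis
    using sum_U_extend[of "Suc m" "Suc (Suc m)" f] sum_U_extend[of m "Suc m" "\<lambda>j. f (Suc j)"]
    by (simp del: sum.atMost_Suc)
qed

definition Usum :: "nat \<Rightarrow> real" where
  "Usum m = (\<Sum>j\<le>m. U m j)"

definition Utail :: "nat \<Rightarrow> nat \<Rightarrow> real" where
  "Utail m a = (\<Sum>j\<le>m. of_bool (a \<le> j) * U m j)"

lemma Usum_Suc_Suc: "Usum (Suc (Suc m)) = Usum (Suc m) + 2 * Usum m"
  using sum_U_Suc_Suc[of "\<lambda>_. 1" m] unfolding Usum_def by simp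

lemma Utail_Suc_Suc: "Utail (Suc (Suc m)) (Suc a) = Utail (Suc m) (Suc a) + 2 * Utail m a"
  unfolding Utail_def by (subst sum_U_Suc_Suc) simp

lemma Utail_0: "Utail m 0 = Usum m"
  unfolding Utail_def Usum_def by simp

lemma Utail_eq_0: "m < 2 * a \<Longrightarrow> Utail m a = 0"
  unfolding Utail_def by (rule sum.neutral) (auto simp: U_eq_0)

lemma Utail_Suc: "Utail m a = Utail m (Suc a) + U m a"
proof -
  have "Utail m a = (\<Sum>j\<le>m. of_bool (Suc a \<le> j) * U m j + of_bool (j = a) * U m j)"
    unfolding Utail_def by (rule sum.cong) auto
  also have "\<dots> = Utail m (Suc a) + U m a"
    unfolding Utail_def sum.distrib by (cases "a \<le> m") (auto simp: U_eq_0)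
  finally show ?thesis .
qed

lemma Usum_nonneg: "Usum m \<ge> 0"
  unfolding Usum_def by (rule sum_nonneg) (simp add: U_nonneg)

lemma Utail_nonneg: "Utail m a \<ge> 0"
  unfolding Utail_def by (rule sum_nonneg) (simp add: U_nonneg)

lemma Utail_eq_sum: "Utail m a = (\<Sum>j=a..m. U m j)"
proof -
  have "Utail m a = (\<Sum>j\<in>{..m}. if a \<le> j then U m j else 0)"
    unfolding Utail_def by (rule sum.cong) auto
  also have "\<dots> = (\<Sum>j\<in>{j \<in> {..m}. a \<le> j}. U m j)"
    by (rule sum.inter_filter[symmetric]) simp
  also have "{j \<in> {..m}. a \<le> j} = {a..m}" by auto
  finally show ?thesis .
qed

lemma Usum_add_Usum_Suc: "Usum m + Usum (Suc m) = 2 ^ Suc m"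
proof (induction m)
  case 0
  show ?case by (simp add: Usum_def U_eq_0)
next
  case (Suc m)
  then show ?case by (simp add: Usum_Suc_Suc)
qed

lemma Usum_le: "Usum m \<le> 2 ^ m"
proof (cases m)
  case (Suc k)
  then show ?thesis using Usum_add_Usum_Suc[of k] Usum_nonneg[of k] by simp
qed (simp add: Usum_def)

lemma sum_Usum: "2 * (\<Sum>i<m. Usum i) = 2 ^ Suc m - 1 - Usum m"
proof (induction m)
  case (Suc m)
  then show ?case using Usum_add_Usum_Suc[of m] by simp
qed (simp add: Usum_def)

section \<open>Binomial tail sums\<close>

lemma sum_choose_Suc:
  "(\<Sum>i\<le>Suc n. f i * real (Suc n choose i)) = (\<Sum>i\<le>n. (f i + f (Suc i)) * real (n choose i))"
proof -
  have "(\<Sum>i\<le>Suc n. f i * real (Suc n choose i))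
      = (f 0 + (\<Sum>i\<le>n. f (Suc i) * real (n choose Suc i))) + (\<Sum>i\<le>n. f (Suc i) * real (n choose i))"
    by (simp add: sum.atMost_Suc_shift algebra_simps sum.distrib del: sum.atMost_Suc)
  also have "f 0 + (\<Sum>i\<le>n. f (Suc i) * real (n choose Suc i)) = (\<Sum>i\<le>n. f i * real (n choose i))"
    using sum.atMost_Suc_shift[of "\<lambda>i. f i * real (n choose i)" n] by (simp add: binomial_eq_0)
  finally show ?thesis by (simp add: algebra_simps sum.distrib)
qed

lemma sum_choose_reflect:
  "(\<Sum>i\<le>n. h i * real (n choose i)) = (\<Sum>i\<le>n. h (n - i) * real (n choose i))"
proof -
  have "(\<Sum>i\<le>n. h i * real (n choose i)) = (\<Sum>i\<le>n. h (n - i) * real (n choose (n - i)))"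
    unfolding atLeast0AtMost[symmetric] by (subst sum.atLeastAtMost_rev) simp
  also have "\<dots> = (\<Sum>i\<le>n. h (n - i) * real (n choose i))"
    by (rule sum.cong) (auto simp: binomial_symmetric[symmetric])
  finally show ?thesis .
qed

definition Btail :: "nat \<Rightarrow> nat \<Rightarrow> real" where
  "Btail n t = (\<Sum>i\<le>n. of_bool (t \<le> i) * real (n choose i))"

definition Bmid :: "nat \<Rightarrow> nat \<Rightarrow> real" where
  "Bmid n t = (\<Sum>i\<le>n. of_bool (n < i + t \<and> i < t) * real (n choose i))"

lemma Btail_Suc_Suc: "Btail (Suc n) (Suc t) = Btail n (Suc t) + Btail n t"
  unfolding Btail_def by (subst sum_choose_Suc) (simp add: sum.distrib algebra_simps)

lemma Btail_0: "Btail n 0 = 2 ^ n"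
  unfolding Btail_def using choose_row_sum[of n] by (simp flip: of_nat_sum)

lemma Utail_add_Utail_Suc: "Utail (n + t) t + Utail (Suc (n + t)) t = 2 ^ t * Btail (Suc n) t"
proof (induction t arbitrary: n)
  case 0
  show ?case using Usum_add_Usum_Suc[of n] by (simp add: Utail_0 Btail_0)
next
  case (Suc t)
  note IH_t = Suc.IH
  show ?case
  proof (induction n)
    case 0
    show ?case
    proof (cases t)
      case 0
      then show ?thesis by (simp add: Utail_def U_eq Btail_def)
    next
      case (Suc t')
      then show ?thesis by (simp add: Utail_eq_0 Btail_def)
    qed
  next
    case (Suc n)
    then show ?case
      using IH_t[of n] IH_t[of "Suc n"] Utail_Suc_Suc[of "n + t" t] Utail_Suc_Suc[of "Suc (n + t)" t]
        Btail_Suc_Suc[of "Suc n" t]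
      by (simp add: algebra_simps)
  qed
qed

lemma two_pow_eq_Btail_Bmid:
  assumes "n < 2 * t"
  shows "2 ^ n = 2 * Btail n t + Bmid n t"
proof -
  have Btail_reflect: "Btail n t = (\<Sum>i\<le>n. of_bool (i + t \<le> n) * real (n choose i))"
    unfolding Btail_def by (subst sum_choose_reflect[of "\<lambda>i. of_bool (t \<le> i)"]) (rule sum.cong, auto)
  have "(2::real) ^ n = (\<Sum>i\<le>n. real (n choose i))"
    using choose_row_sum[of n] by (simp flip: of_nat_sum)
  also have "\<dots> = (\<Sum>i\<le>n. (of_bool (t \<le> i) + of_bool (i + t \<le> n)
        + of_bool (n < i + t \<and> i < t)) * real (n choose i))"
    by (rule sum.cong) (use assms in auto)
  also have "\<dots> = Btail n t + (\<Sum>i\<le>n. of_bool (i + t \<le> n) * real (n choose i)) + Bmid n t"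
    unfolding Btail_def Bmid_def by (simp add: algebra_simps sum.distrib)
  finally show ?thesis unfolding Btail_reflect[symmetric] by simp
qed

lemma Bmid_0: "0 < t \<Longrightarrow> Bmid 0 t = 1"
  unfolding Bmid_def by simp

lemma Bmid_mono:
  assumes "n + 3 \<le> 2 * t"
  shows "Bmid n t \<le> Bmid (Suc n) t"
  unfolding Bmid_def sum_choose_Suc by (rule sum_mono) (use assms in auto)

section \<open>Alternating sums of \<open>U(N,j)\<close>\<close>

definition Usigned :: "nat \<Rightarrow> nat \<Rightarrow> real" where
  "Usigned t N = Usum N - 2 * Utail N t"

definition Ubound :: "nat \<Rightarrow> nat \<Rightarrow> real" where
  "Ubound t N = (if N \<le> t then 2 ^ N else 2 ^ t * Bmid (N - t) t)"

lemma Ubound_eq: "0 < t \<Longrightarrow> t \<le> N \<Longrightarrow> Ubound t N = 2 ^ t * Bmid (N - t) t"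
  unfolding Ubound_def by (auto simp: Bmid_0)

lemma Usigned_add_Usigned_Suc:
  assumes "0 < t" "Suc N < 3 * t"
  shows "Usigned t N + Usigned t (Suc N) = Ubound t (Suc N)"
proof (cases "Suc N \<le> t")
  case True
  then have "Utail N t = 0" "Utail (Suc N) t = 0" using assms(1) by (simp_all add: Utail_eq_0)
  then show ?thesis using True Usum_add_Usum_Suc[of N] by (simp add: Usigned_def Ubound_def)
next
  case False
  then obtain n where N: "N = n + t" using le_Suc_ex[of t N] by auto
  have "Usigned t N + Usigned t (Suc N) = (Usum N + Usum (Suc N)) - 2 * (Utail N t + Utail (Suc N) t)"
    by (simp add: Usigned_def)
  also have "\<dots> = 2 ^ t * (2 ^ Suc n - 2 * Btail (Suc n) t)"
    using Usum_add_Usum_Suc[of N] Utail_add_Utail_Suc[of n t]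
    by (simp add: N power_add algebra_simps)
  also have "\<dots> = 2 ^ t * Bmid (Suc n) t"
    using two_pow_eq_Btail_Bmid[of "Suc n" t] assms(2) N by simp
  finally show ?thesis using False N by (simp add: Ubound_def)
qed

lemma Ubound_mono:
  assumes "0 < t" "Suc N + 2 \<le> 3 * t"
  shows "Ubound t N \<le> Ubound t (Suc N)"
proof (cases "Suc N \<le> t")
  case False
  then have tN: "t \<le> N" by simp
  moreover have "Bmid (N - t) t \<le> Bmid (Suc (N - t)) t"
    by (rule Bmid_mono) (use assms tN in arith)
  ultimately show ?thesis using assms(1) by (simp add: Ubound_eq Suc_diff_le)
qed (simp add: Ubound_def)

text \<open>The two-sided bound propagates along \<open>N\<close>: \<open>Usigned t (Suc N)\<close> is the
  increment of \<open>Ubound\<close> minus a quantity in \<open>[0, Ubound t N]\<close>.\<close>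

lemma Usigned_bounds:
  assumes "0 < t" "N + 2 \<le> 3 * t"
  shows "0 \<le> Usigned t N \<and> Usigned t N \<le> Ubound t N"
  using assms(2)
proof (induction N)
  case 0
  have "Utail 0 t = 0" using assms(1) by (simp add: Utail_eq_0)
  then show ?case by (simp add: Usigned_def Ubound_def Usum_def)
next
  case (Suc N)
  then have "0 \<le> Usigned t N \<and> Usigned t N \<le> Ubound t N" by simp
  moreover have "Usigned t N + Usigned t (Suc N) = Ubound t (Suc N)"
    by (rule Usigned_add_Usigned_Suc) (use assms(1) Suc.prems in simp_all)
  moreover have "Ubound t N \<le> Ubound t (Suc N)"
    by (rule Ubound_mono) (use assms(1) Suc.prems in simp_all)
  ultimately show ?case by linarith
qed

lemma Dt_eq: "Dt t = Usum (3 * t) - U (3 * t) t - 2 * Utail (3 * t) (Suc t)"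
proof -
  have "{..3 * t} = {..<t} \<union> {t..3 * t}" by auto
  then have "Usum (3 * t) = (\<Sum>j<t. U (3 * t) j) + Utail (3 * t) t"
    unfolding Usum_def Utail_eq_sum by (simp only:) (rule sum.union_disjoint, auto)
  moreover have "{t + 1..3 * t} = {Suc t..3 * t}" by simp
  ultimately show ?thesis
    unfolding Dt_def using Utail_Suc[of "3 * t" t] by (simp add: Utail_eq_sum)
qed

lemma Ct_eq_U: "Ct t = U (3 * t) t"
proof -
  have "3 * t - t = 2 * t" by simp
  then show ?thesis unfolding Ct_def U_eq by simp
qed

lemma U_central: "U (3 * s + 2) (Suc s) = 2 * U (3 * s + 1) s"
proof -
  have "3 * s + 2 - Suc s = Suc (2 * s)" "3 * s + 1 - s = Suc (2 * s)" by simp_all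
  moreover have "Suc (2 * s) choose Suc s = Suc (2 * s) choose s"
    using binomial_symmetric[of "Suc s" "Suc (2 * s)"] by simp
  ultimately show ?thesis unfolding U_eq by simp
qed

lemma Ct_Suc: "Ct (Suc s) = 2 * U (3 * s + 2) (Suc s)"
proof -
  have e: "3 * Suc s = Suc (Suc (3 * s + 1))" "Suc (3 * s + 1) = 3 * s + 2" by simp_all
  show ?thesis
    using Ct_eq_U[of "Suc s", unfolded e] U_Suc_Suc[of "3 * s + 1" s, unfolded e] U_central[of s]
    by simp
qed

lemma Btail_central: "Btail (Suc (2 * s)) (Suc s) = 2 ^ (2 * s)"
proof -
  have "Bmid (Suc (2 * s)) (Suc s) = 0"
    unfolding Bmid_def by (rule sum.neutral) auto
  then show ?thesis using two_pow_eq_Btail_Bmid[of "Suc (2 * s)" "Suc s"] by simp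
qed

lemma Utail_central: "Utail (3 * s + 1) (Suc s) + Utail (3 * s + 2) (Suc s) = 2 ^ (3 * s + 1)"
  using Utail_add_Utail_Suc[of "2 * s" "Suc s"] Btail_central[of s]
  by (simp add: power_add[symmetric] add.commute)

lemma Dt_eq_Usigned: "Dt (Suc s) = Usigned (Suc s) (3 * s + 1)"
proof -
  define m where "m = 3 * s + 1"
  have m: "3 * Suc s = Suc (Suc m)" "3 * s + 2 = Suc m" unfolding m_def by simp_all
  have "Dt (Suc s) = Usum (Suc (Suc m)) - U (Suc (Suc m)) (Suc s) - 2 * Utail (Suc (Suc m)) (Suc (Suc s))"
    using Dt_eq[of "Suc s"] unfolding m .
  moreover have "Utail (Suc (Suc m)) (Suc (Suc s))
      = Utail (Suc m) (Suc s) - U (Suc m) (Suc s) + 2 * Utail m (Suc s)"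
    using Utail_Suc_Suc[of m "Suc s"] Utail_Suc[of "Suc m" "Suc s"] by simp
  ultimately show ?thesis
    using Usum_Suc_Suc[of m] U_Suc_Suc[of m s] Usum_add_Usum_Suc[of m]
      U_central[of s] Utail_central[of s] unfolding Usigned_def m m_def[symmetric] by simp
qed

lemma Dt_bounds: "0 \<le> Dt (Suc s) \<and> 2 * Dt (Suc s) \<le> Ct (Suc s)"
proof -
  have Dt: "0 \<le> Dt (Suc s) \<and> Dt (Suc s) \<le> Ubound (Suc s) (3 * s + 1)"
    unfolding Dt_eq_Usigned by (rule Usigned_bounds) simp_all
  have "Bmid (2 * s) (Suc s) = (\<Sum>i\<le>2 * s. if i = s then real (2 * s choose i) else 0)"
    unfolding Bmid_def by (rule sum.cong) auto
  then have "Ubound (Suc s) (3 * s + 1) = 2 ^ Suc s * real (2 * s choose s)"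
    by (simp add: Ubound_eq)
  also have "\<dots> \<le> U (3 * s + 2) (Suc s)"
  proof -
    have "3 * s + 2 - Suc s = Suc (2 * s)" by simp
    then show ?thesis unfolding U_eq by simp
  qed
  finally show ?thesis using Dt Ct_Suc[of s] by simp
qed

text \<open>For \<open>n + x = m\<close>, \<open>Icount m x\<close> is the number of strings with \<open>I = 1\<close> among the
  \<open>4 U(m,x)\<close> strings of length \<open>n + 1\<close> with \<open>X = x\<close>, as long as it lies between these
  bounds (see \<open>g_eq_Icount\<close>).\<close>

definition Icount :: "nat \<Rightarrow> nat \<Rightarrow> real" where
  "Icount m x = 2 * Usum m - 4 * Utail m (Suc x)"

lemma Icount_central:
  "Icount (3 * s + 3) (Suc s) = 2 * Ct (Suc s) + 2 * Dt (Suc s)"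
  "Icount (3 * s + 2) (Suc s) = 2 * Ct (Suc s) - 2 * Dt (Suc s)"
  "Icount (3 * s + 1) s = 2 * Dt (Suc s)"
proof -
  have e: "3 * Suc s = 3 * s + 3" by simp
  show "Icount (3 * s + 3) (Suc s) = 2 * Ct (Suc s) + 2 * Dt (Suc s)"
    using Dt_eq[of "Suc s", unfolded e] Ct_eq_U[of "Suc s", unfolded e] unfolding Icount_def by simp
  show "Icount (3 * s + 1) s = 2 * Dt (Suc s)"
    using Dt_eq_Usigned[of s] unfolding Icount_def Usigned_def by simp
  have "Icount (3 * s + 2) (Suc s)
      = 2 * Usum (3 * s + 2) - 4 * Utail (3 * s + 2) (Suc s) + 4 * U (3 * s + 2) (Suc s)"
    using Utail_Suc[of "3 * s + 2" "Suc s"] unfolding Icount_def by simp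
  moreover have "Usum (3 * s + 2) = 2 ^ (3 * s + 2) - Usum (3 * s + 1)"
    using Usum_add_Usum_Suc[of "3 * s + 1"] by simp
  ultimately show "Icount (3 * s + 2) (Suc s) = 2 * Ct (Suc s) - 2 * Dt (Suc s)"
    using Utail_central[of s] Ct_Suc[of s] Dt_eq_Usigned[of s] unfolding Usigned_def by simp
qed

section \<open>Probabilities of admissible strings\<close>

lemma UNIV_letter: "(UNIV :: letter set) = {LA, LB, LC, LD}"
  using letter.exhaust by auto

instance letter :: finite
  by standard (simp add: UNIV_letter)

lemma card_UNIV_letter [simp]: "card (UNIV :: letter set) = 4"
  unfolding UNIV_letter by simp

lemma sum_UNIV_letter: "(\<Sum>z\<in>UNIV. f z) = f LA + f LB + f LC + f LD"
  unfolding UNIV_letter by (simp add: add.assoc)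

lemma admissible_Nil [simp]: "\<not> admissible []"
  unfolding admissible_def by simp

lemma admissible_single [simp]: "admissible [x]"
  unfolding admissible_def by simp

lemma admissible_Cons_Cons [simp]:
  "admissible (x # y # ys) \<longleftrightarrow> trans x y > 0 \<and> admissible (y # ys)"
proof
  assume "admissible (x # y # ys)"
  then have step: "\<And>i. Suc i < length (x # y # ys) \<Longrightarrow> trans ((x # y # ys) ! i) ((x # y # ys) ! Suc i) > 0"
    unfolding admissible_def by blast
  show "trans x y > 0 \<and> admissible (y # ys)"
    using step[of 0] step[of "Suc _"] unfolding admissible_def by auto
next
  assume "trans x y > 0 \<and> admissible (y # ys)"
  then show "admissible (x # y # ys)"
    unfolding admissible_def by (auto simp: less_Suc_eq_0_disj)
qed

lemma trans_nonneg: "trans x y \<ge> 0"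
  unfolding trans_def by (cases x) auto

lemma trans_pos: "trans x y > 0 \<Longrightarrow> trans x y = (if isCD x then 1/4 else 1/2)"
  unfolding trans_def isCD_def by (cases x) (auto split: if_splits)

lemma Xcount_single [simp]: "Xcount [x] = 0"
  unfolding Xcount_def by simp

lemma Xcount_Cons_Cons [simp]: "Xcount (x # y # ys) = of_bool (isCD x) + Xcount (y # ys)"
  unfolding Xcount_def by simp

lemma Xcount_less_length:
  assumes "u \<noteq> []"
  shows "Xcount u < length u"
proof -
  have "Xcount u \<le> length u - 1"
    unfolding Xcount_def using length_filter_le[of isCD "butlast u"] by simp
  moreover have "0 < length u" using assms by simp
  ultimately show ?thesis by linarith
qed

text \<open>\<open>K(u)\<close> as a natural number: an admissible \<open>u\<close> pays \<open>1/4\<close> for its first letter,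
  \<open>1/4\<close> for each transition out of \<open>C\<close> or \<open>D\<close> and \<open>1/2\<close> for every other transition.\<close>

definition Knat :: "letter list \<Rightarrow> nat" where
  "Knat u = length u + 1 + Xcount u"

lemma path_prob_admissible:
  "admissible (x # ys) \<Longrightarrow> path_prob x ys = (1/2) ^ (length ys + Xcount (x # ys))"
proof (induction ys arbitrary: x)
  case (Cons y ys)
  then have "trans x y = (if isCD x then 1/4 else 1/2)" by (simp add: trans_pos)
  then show ?case using Cons by (simp add: power_add)
qed simp

lemma path_prob_not_admissible: "\<not> admissible (x # ys) \<Longrightarrow> path_prob x ys = 0"
proof (induction ys arbitrary: x)
  case (Cons y ys)
  then show ?case using trans_nonneg[of x y] by (cases "trans x y > 0") auto
qed simp

lemma seq_prob_admissible: "admissible u \<Longrightarrow> seq_prob u = (1/2) ^ Knat u"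
  by (cases u) (simp_all add: path_prob_admissible Knat_def power_add)

lemma seq_prob_not_admissible: "u \<noteq> [] \<Longrightarrow> \<not> admissible u \<Longrightarrow> seq_prob u = 0"
  by (cases u) (simp_all add: path_prob_not_admissible)

lemma Kc_admissible: "admissible u \<Longrightarrow> Kc u = real (Knat u)"
  unfolding Kc_def by (simp add: seq_prob_admissible log_divide power_one_over)

lemma Knat_bounds: "admissible u \<Longrightarrow> 2 * Xcount u + 2 \<le> Knat u \<and> length u < Knat u"
  using Xcount_less_length[of u] unfolding Knat_def by (cases "u = []") auto

lemma finite_length_le: "finite {u :: letter list. length u \<le> n}"
  using finite_lists_length_le[of "UNIV :: letter set" n] by simp

lemma finite_length_eq: "finite {u :: letter list. length u = n}"
  by (rule finite_subset[OF _ finite_length_le[of n]]) auto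

definition adm_class :: "nat \<Rightarrow> nat \<Rightarrow> letter list set" where
  "adm_class n x = {u. admissible u \<and> length u = n \<and> Xcount u = x}"

definition adm_class_hd :: "nat \<Rightarrow> nat \<Rightarrow> letter \<Rightarrow> letter list set" where
  "adm_class_hd n x y = {u \<in> adm_class n x. hd u = y}"

lemma finite_adm_class: "finite (adm_class n x)"
  by (rule finite_subset[OF _ finite_length_eq[of n]]) (auto simp: adm_class_def)

lemma finite_adm_class_hd: "finite (adm_class_hd n x y)"
  using finite_adm_class unfolding adm_class_hd_def by simp

lemma card_adm_class_hd_1: "card (adm_class_hd (Suc 0) x y) = of_bool (x = 0)"
proof -
  have "adm_class_hd (Suc 0) x y = (if x = 0 then {[y]} else {})"
    unfolding adm_class_hd_def adm_class_def by (auto simp: length_Suc_conv Suc_le_length_iff)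
  then show ?thesis by simp
qed

lemma adm_class_hd_disjoint: "z \<noteq> z' \<Longrightarrow> adm_class_hd n x z \<inter> adm_class_hd n x z' = {}"
  unfolding adm_class_hd_def by auto

lemma adm_class_hd_Suc:
  assumes "1 \<le> n" "of_bool (isCD y) \<le> x"
  shows "adm_class_hd (Suc n) x y
    = Cons y ` (\<Union>z\<in>{z. trans y z > 0}. adm_class_hd n (x - of_bool (isCD y)) z)"
proof (intro set_eqI iffI)
  fix u assume u: "u \<in> adm_class_hd (Suc n) x y"
  then obtain z w where "u = y # z # w"
    using assms(1) unfolding adm_class_hd_def adm_class_def by (auto simp: length_Suc_conv Suc_le_length_iff)
  with u show "u \<in> Cons y ` (\<Union>z\<in>{z. trans y z > 0}. adm_class_hd n (x - of_bool (isCD y)) z)"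
    unfolding adm_class_hd_def adm_class_def by auto
next
  fix u assume "u \<in> Cons y ` (\<Union>z\<in>{z. trans y z > 0}. adm_class_hd n (x - of_bool (isCD y)) z)"
  then obtain z w where "u = y # z # w" "trans y z > 0" "z # w \<in> adm_class_hd n (x - of_bool (isCD y)) z"
    using assms(1) unfolding adm_class_hd_def adm_class_def by (auto simp: length_Suc_conv Suc_le_length_iff)
  then show "u \<in> adm_class_hd (Suc n) x y"
    using assms(2) unfolding adm_class_hd_def adm_class_def by auto
qed

lemma adm_class_hd_Suc_empty:
  "x < of_bool (isCD y) \<Longrightarrow> 1 \<le> n \<Longrightarrow> adm_class_hd (Suc n) x y = {}"
  unfolding adm_class_hd_def adm_class_def by (auto simp: length_Suc_conv Suc_le_length_iff)

lemma card_adm_class_hd_Suc: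
  assumes "1 \<le> n"
  shows "card (adm_class_hd (Suc n) x y) = (if of_bool (isCD y) \<le> x
    then (\<Sum>z | trans y z > 0. card (adm_class_hd n (x - of_bool (isCD y)) z)) else 0)"
proof (cases "of_bool (isCD y) \<le> x")
  case True
  have "card (adm_class_hd (Suc n) x y)
      = card (\<Union>z\<in>{z. trans y z > 0}. adm_class_hd n (x - of_bool (isCD y)) z)"
    unfolding adm_class_hd_Suc[OF assms True] by (simp add: card_image)
  also have "\<dots> = (\<Sum>z | trans y z > 0. card (adm_class_hd n (x - of_bool (isCD y)) z))"
    by (rule card_UN_disjoint) (simp_all add: finite_adm_class_hd adm_class_hd_disjoint)
  finally show ?thesis using True by simp
qed (use adm_class_hd_Suc_empty assms in simp)

definition hd_count :: "nat \<Rightarrow> nat \<Rightarrow> letter \<Rightarrow> nat" where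
  "hd_count m x y = (if \<not> isCD y then 2 ^ Suc x * (m choose x)
     else if x = 0 then 0 else 2 ^ Suc x * (m choose (x - 1)))"

lemma successors_letter:
  "{z. trans LA z > 0} = {LA, LC}" "{z. trans LB z > 0} = {LB, LD}"
  "{z. trans LC z > 0} = UNIV" "{z. trans LD z > 0} = UNIV"
  unfolding trans_def by auto

lemma sum_successors_hd_count:
  "(\<Sum>z | trans y z > 0. hd_count m x z) = (if isCD y then 2 else 1) * 2 ^ Suc x * (Suc m choose x)"
proof -
  have "hd_count m x LA + hd_count m x LC = 2 ^ Suc x * (Suc m choose x)"
    unfolding hd_count_def isCD_def by (cases x) (simp_all add: algebra_simps)
  moreover have "hd_count m x LB = hd_count m x LA" "hd_count m x LD = hd_count m x LC"
    unfolding hd_count_def isCD_def by simp_all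
  ultimately show ?thesis
    by (cases y) (simp_all add: successors_letter sum_UNIV_letter isCD_def)
qed

lemma card_adm_class_hd: "card (adm_class_hd (Suc (Suc m)) x y) = hd_count m x y"
proof (induction m arbitrary: x y)
  case 0
  show ?case
    unfolding card_adm_class_hd_Suc[of "Suc 0", simplified] card_adm_class_hd_1
    by (cases y; cases x) (simp_all add: successors_letter sum_UNIV_letter hd_count_def isCD_def)
next
  case (Suc m)
  have "card (adm_class_hd (Suc (Suc (Suc m))) x y) = (if of_bool (isCD y) \<le> x
      then (\<Sum>z | trans y z > 0. hd_count m (x - of_bool (isCD y)) z) else 0)"
    using card_adm_class_hd_Suc[of "Suc (Suc m)" x y] Suc.IH by simp
  also have "\<dots> = hd_count (Suc m) x y"
    unfolding sum_successors_hd_count by (cases x) (simp_all add: hd_count_def)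
  finally show ?case .
qed

lemma card_adm_class: "card (adm_class (Suc m) x) = 4 * 2 ^ x * (m choose x)"
proof -
  have "adm_class (Suc m) x = (\<Union>y. adm_class_hd (Suc m) x y)"
    unfolding adm_class_hd_def by auto
  then have "card (adm_class (Suc m) x) = (\<Sum>y\<in>UNIV. card (adm_class_hd (Suc m) x y))"
    by (simp add: card_UN_disjoint finite_adm_class_hd adm_class_hd_disjoint)
  also have "\<dots> = 4 * 2 ^ x * (m choose x)"
  proof (cases m)
    case 0
    then show ?thesis by (simp add: sum_UNIV_letter card_adm_class_hd_1)
  next
    case (Suc k)
    have "(\<Sum>y\<in>UNIV. hd_count k x y) = (\<Sum>y | trans LC y > 0. hd_count k x y)"
      by (simp add: successors_letter)
    then show ?thesis
      using Suc by (simp add: card_adm_class_hd sum_successors_hd_count isCD_def)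
  qed
  finally show ?thesis .
qed

lemma finite_Knat_le: "finite {v. admissible v \<and> Knat v \<le> K}"
  by (rule finite_subset[OF _ finite_length_le[of K]]) (auto dest: Knat_bounds)

lemma finite_Knat_eq: "finite {v. admissible v \<and> Knat v = K \<and> P v}"
  by (rule finite_subset[OF _ finite_Knat_le[of K]]) auto

lemma card_level_Xcount: "real (card {v. admissible v \<and> Knat v = m + 2 \<and> Xcount v = j}) = 4 * U m j"
proof (cases "j \<le> m")
  case True
  then have "{v. admissible v \<and> Knat v = m + 2 \<and> Xcount v = j} = adm_class (Suc (m - j)) j"
    unfolding adm_class_def Knat_def by auto
  then show ?thesis using card_adm_class[of "m - j" j] by (simp add: U_eq)
next
  case False
  have "{v. admissible v \<and> Knat v = m + 2 \<and> Xcount v = j} = {}"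
    using False Knat_bounds by fastforce
  then show ?thesis using False by (simp only:) (simp add: U_eq_0)
qed

lemma card_level_filter:
  "real (card {v. admissible v \<and> Knat v = m + 2 \<and> P (Xcount v)}) = 4 * (\<Sum>j\<le>m. of_bool (P j) * U m j)"
proof -
  let ?L = "\<lambda>j. {v. admissible v \<and> Knat v = m + 2 \<and> Xcount v = j}"
  have levels: "{v. admissible v \<and> Knat v = m + 2 \<and> P (Xcount v)} = (\<Union>j\<in>{j \<in> {..m}. P j}. ?L j)"
    using Knat_bounds by fastforce
  have "card {v. admissible v \<and> Knat v = m + 2 \<and> P (Xcount v)} = (\<Sum>j\<in>{j \<in> {..m}. P j}. card (?L j))"
    unfolding levels by (rule card_UN_disjoint) (auto simp: finite_Knat_eq)
  then have "real (card {v. admissible v \<and> Knat v = m + 2 \<and> P (Xcount v)}) = (\<Sum>j\<in>{j \<in> {..m}. P j}. 4 * U m j)"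
    by (simp only: of_nat_sum card_level_Xcount)
  also have "\<dots> = 4 * (\<Sum>j\<le>m. of_bool (P j) * U m j)"
    by (simp add: sum_distrib_left Int_def)
  finally show ?thesis .
qed

lemma card_below_level: "real (card {v. admissible v \<and> Knat v < m + 2}) = 2 ^ (m + 2) - 2 - 2 * Usum m"
proof -
  let ?L = "\<lambda>i. {v. admissible v \<and> Knat v = i + 2}"
  have levels: "{v. admissible v \<and> Knat v < m + 2} = (\<Union>i<m. ?L i)"
  proof (intro set_eqI iffI)
    fix v assume "v \<in> {v. admissible v \<and> Knat v < m + 2}"
    moreover then have "Knat v = (Knat v - 2) + 2" using Knat_bounds by fastforce
    ultimately show "v \<in> (\<Union>i<m. ?L i)" by (intro UN_I[of "Knat v - 2"]) auto
  qed auto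
  have "card {v. admissible v \<and> Knat v < m + 2} = (\<Sum>i<m. card (?L i))"
    unfolding levels
    by (rule card_UN_disjoint) (auto intro: finite_subset[OF _ finite_Knat_le])
  then have "real (card {v. admissible v \<and> Knat v < m + 2}) = (\<Sum>i<m. real (card (?L i)))"
    by simp
  also have "\<dots> = 4 * (\<Sum>i<m. Usum i)"
    using card_level_filter[of _ "\<lambda>_. True"] by (simp add: Usum_def sum_distrib_left)
  finally show ?thesis using sum_Usum[of m] by simp
qed

section \<open>Ranks and code lengths\<close>

lemma rank_less:
  assumes "transp R" "irreflp R" "R a b" "Q a" "finite {y. Q y \<and> R y b}"
  shows "card {y. Q y \<and> R y a} < card {y. Q y \<and> R y b}"
proof (rule psubset_card_mono)
  show "{y. Q y \<and> R y a} \<subset> {y. Q y \<and> R y b}"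
    using assms(1-4) by (auto dest: transpD irreflpD)
qed fact

lemma inj_on_rank:
  assumes "transp R" "irreflp R" "totalp_on A R"
    and "\<And>a. a \<in> A \<Longrightarrow> Q a" "\<And>a. a \<in> A \<Longrightarrow> finite {y. Q y \<and> R y a}"
  shows "inj_on (\<lambda>a. card {y. Q y \<and> R y a}) A"
proof (rule inj_onI, rule ccontr)
  fix a b assume ab: "a \<in> A" "b \<in> A" "a \<noteq> b"
    and eq: "card {y. Q y \<and> R y a} = card {y. Q y \<and> R y b}"
  then consider "R a b" | "R b a" using assms(3) by (auto dest: totalp_onD)
  then show False
  proof cases
    case 1
    from rank_less[OF assms(1,2) 1 assms(4)[OF ab(1)] assms(5)[OF ab(2)]] eq show False by simp
  next
    case 2
    from rank_less[OF assms(1,2) 2 assms(4)[OF ab(2)] assms(5)[OF ab(1)]] eq show False by simp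
  qed
qed

lemma trans_less_rel: "Relation.trans {(a, b). (a :: 'a :: order) < b}"
  by (auto intro: transI)

lemma transp_aprec: "transp aprec"
  unfolding aprec_def by (rule transpI) (auto dest: lexord_trans[OF _ _ trans_less_rel])

lemma irreflp_aprec: "irreflp aprec"
  unfolding aprec_def by (rule irreflpI) (simp add: lexord_irreflexive)

lemma inj_idx: "inj idx"
  by (rule injI) (simp add: idx_def split: letter.splits)

lemma totalp_aprec: "totalp aprec"
proof (rule totalpI)
  fix a b :: "letter list" assume "a \<noteq> b"
  then have "map idx a \<noteq> map idx b" by (simp add: inj_map_eq_map[OF inj_idx])
  define R where "R = {(a, b). (a :: nat) < b}"
  have "\<forall>a b. (a, b) \<in> R \<or> a = b \<or> (b, a) \<in> R" unfolding R_def by auto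
  then have "(map idx a, map idx b) \<in> lexord R \<or> (map idx b, map idx a) \<in> lexord R"
    using lexord_linear[of R "map idx a" "map idx b"] \<open>map idx a \<noteq> map idx b\<close> by blast
  then show "aprec a b \<or> aprec b a" unfolding aprec_def R_def[symmetric] by auto
qed

lemma transp_bprec: "transp bprec"
  unfolding bprec_def by (rule transpI) (auto dest: lexord_trans[OF _ _ trans_less_rel])

lemma irreflp_bprec: "irreflp bprec"
  unfolding bprec_def by (rule irreflpI) (simp add: lexord_irreflexive)

lemma totalp_bprec: "totalp bprec"
proof (rule totalpI)
  fix v w :: "bool list" assume "v \<noteq> w"
  define R where "R = {(a, b). (a :: bool) < b}"
  have "\<forall>a b. (a, b) \<in> R \<or> a = b \<or> (b, a) \<in> R" unfolding R_def by auto
  then have "(v, w) \<in> lexord R \<or> (w, v) \<in> lexord R"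
    using lexord_linear[of R v w] \<open>v \<noteq> w\<close> by blast
  then show "bprec v w \<or> bprec w v" unfolding bprec_def R_def[symmetric] by auto
qed

lemma finite_bool_length_le: "finite {v :: bool list. length v \<le> n}"
  using finite_lists_length_le[of "UNIV :: bool set" n] by simp

lemma finite_bool_length_less: "finite {v :: bool list. length v < n}"
  by (rule finite_subset[OF _ finite_bool_length_le[of n]]) auto

lemma finite_bool_length_eq: "finite {v :: bool list. length v = n}"
  by (rule finite_subset[OF _ finite_bool_length_le[of n]]) auto

lemma card_bool_length_eq: "card {v :: bool list. length v = n} = 2 ^ n"
  using card_lists_length_eq[of "UNIV :: bool set" n] by simp

lemma card_bool_length_less: "card {v :: bool list. length v < n} = 2 ^ n - 1"
proof (induction n)
  case (Suc n)
  have "{v :: bool list. length v < Suc n} = {v. length v < n} \<union> {v. length v = n}"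
    by auto
  moreover have "card ({v :: bool list. length v < n} \<union> {v. length v = n})
      = card {v :: bool list. length v < n} + card {v :: bool list. length v = n}"
    by (rule card_Un_disjoint) (auto simp: finite_bool_length_less finite_bool_length_eq)
  ultimately show ?case using Suc by (simp add: card_bool_length_eq one_le_power)
qed simp

lemma card_bool_nonempty_length_less: "card {v :: bool list. v \<noteq> [] \<and> length v < n} = 2 ^ n - 2"
proof (cases n)
  case (Suc n')
  have "{v :: bool list. v \<noteq> [] \<and> length v < n} = {v. length v < n} - {[]}" by auto
  then show ?thesis
    using card_bool_length_less[of n] Suc by (simp add: finite_bool_length_less)
qed simp

lemma brank_bounds:
  assumes "w \<noteq> []"
  shows "2 ^ length w \<le> brank w + 2 \<and> brank w + 2 < 2 ^ Suc (length w)"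
proof -
  let ?L = "length w"
  let ?same = "{v. length v = ?L \<and> bprec v w}"
  have split: "{v. v \<noteq> [] \<and> bprec v w} = {v. v \<noteq> [] \<and> length v < ?L} \<union> ?same"
    using assms unfolding bprec_def by auto
  have "brank w = (2 ^ ?L - 2) + card ?same"
    unfolding brank_def split card_bool_nonempty_length_less[symmetric]
    by (rule card_Un_disjoint)
       (auto intro: rev_finite_subset[OF finite_bool_length_less] rev_finite_subset[OF finite_bool_length_eq])
  moreover have "card ?same \<le> 2 ^ ?L - 1"
  proof -
    have "?same \<subseteq> {v. length v = ?L} - {w}" using irreflp_bprec by (auto dest: irreflpD)
    then have "card ?same \<le> card ({v :: bool list. length v = ?L} - {w})"
      by (intro card_mono) (simp_all add: finite_bool_length_eq)
    then show ?thesis by (simp add: card_bool_length_eq finite_bool_length_eq)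
  qed
  moreover have "2 \<le> (2 :: nat) ^ ?L"
    using assms by (cases w) simp_all
  ultimately show ?thesis by (simp only: power_Suc) linarith
qed

lemma finite_bprec_below: "finite {v. v \<noteq> [] \<and> bprec v w}"
  by (rule rev_finite_subset[OF finite_bool_length_le[of "length w"]]) (auto simp: bprec_def)

lemma inj_on_brank: "inj_on brank {w. w \<noteq> []}"
  unfolding brank_def
  by (rule inj_on_rank[OF transp_bprec irreflp_bprec])
     (auto intro: totalp_on_subset[OF totalp_bprec] simp: finite_bprec_below)

lemma brank_surj: "\<exists>w. w \<noteq> [] \<and> brank w = r"
proof -
  let ?L = "Suc (Suc r)"
  let ?A = "{w :: bool list. w \<noteq> [] \<and> length w < ?L}"
  let ?N = "(2 :: nat) ^ ?L - 2"
  have "brank ` ?A \<subseteq> {..< ?N}"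
  proof
    fix b assume "b \<in> brank ` ?A"
    then obtain w where w: "w \<noteq> []" "length w < ?L" "b = brank w" by auto
    have "brank w + 2 < 2 ^ Suc (length w)" using brank_bounds[OF w(1)] by simp
    also have "\<dots> \<le> 2 ^ ?L" using w(2) by (intro power_increasing) auto
    finally show "b \<in> {..< ?N}" using w(3) by simp
  qed
  moreover have "card (brank ` ?A) = card {..< ?N}"
    using card_image[OF inj_on_subset[OF inj_on_brank, of ?A]] card_bool_nonempty_length_less[of ?L]
    by auto
  ultimately have "brank ` ?A = {..< ?N}" by (intro card_subset_eq) auto
  moreover have "r < ?N" using less_exp[of ?L] by simp
  ultimately show ?thesis by (metis (mono_tags, lifting) imageE lessThan_iff mem_Collect_eq)
qed

lemma brank_ex1: "\<exists>!w. w \<noteq> [] \<and> brank w = r"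
  using brank_surj[of r] inj_on_brank unfolding inj_on_def by blast

lemma code_props: "code u \<noteq> [] \<and> brank (code u) = arank u"
  unfolding code_def by (rule theI'[OF brank_ex1])

lemma length_code: "length (code u) = floor_log (arank u + 2)"
  using brank_bounds[of "code u"] code_props[of u] by (auto intro!: floor_log_eqI[symmetric])

lemma Iev_iff:
  assumes "admissible u"
  shows "Iev u \<longleftrightarrow> 2 ^ (Knat u - 1) \<le> arank u + 2 \<and> arank u + 2 < 2 ^ Knat u"
proof -
  let ?r = "arank u + 2"
  have K2: "2 \<le> Knat u" using Knat_bounds[OF assms] by simp
  then have "Iev u \<longleftrightarrow> floor_log ?r = Knat u - 1"
    unfolding Iev_def length_code Kc_admissible[OF assms] by auto
  also have "\<dots> \<longleftrightarrow> 2 ^ (Knat u - 1) \<le> ?r \<and> ?r < 2 ^ Knat u"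
  proof
    assume "floor_log ?r = Knat u - 1"
    moreover have "2 ^ floor_log ?r \<le> ?r" by (rule floor_log_exp2_le) simp
    moreover have "?r < 2 * 2 ^ floor_log ?r" by (rule floor_log_exp2_gt)
    ultimately show "2 ^ (Knat u - 1) \<le> ?r \<and> ?r < 2 ^ Knat u"
      using K2 by (simp flip: power_Suc)
  next
    assume "2 ^ (Knat u - 1) \<le> ?r \<and> ?r < 2 ^ Knat u"
    then show "floor_log ?r = Knat u - 1"
      using K2 by (intro floor_log_eqI) (simp_all flip: power_Suc)
  qed
  finally show ?thesis .
qed

section \<open>The conditional probabilities \<open>g\<close>\<close>

text \<open>The strings enumerated before those with \<open>K = m + 2\<close> and \<open>X = x\<close>; for equal \<open>K\<close>
  a larger \<open>X\<close> means a shorter string.\<close>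

definition preceding :: "nat \<Rightarrow> nat \<Rightarrow> letter list set" where
  "preceding m x = {v. admissible v \<and> Knat v < m + 2} \<union> {v. admissible v \<and> Knat v = m + 2 \<and> x < Xcount v}"

lemma finite_preceding: "finite (preceding m x)"
  unfolding preceding_def by (rule rev_finite_subset[OF finite_Knat_le[of "m + 2"]]) auto

lemma card_preceding: "real (card (preceding m x)) = 2 ^ (m + 2) - 2 - Icount m x"
proof -
  have "card (preceding m x) = card {v. admissible v \<and> Knat v < m + 2}
      + card {v. admissible v \<and> Knat v = m + 2 \<and> x < Xcount v}"
    unfolding preceding_def
    by (rule card_Un_disjoint) (auto intro: rev_finite_subset[OF finite_Knat_le[of "m + 2"]])
  moreover have "(\<Sum>j\<le>m. of_bool (x < j) * U m j) = Utail m (Suc x)"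
    unfolding Utail_def by (simp add: Suc_le_eq)
  ultimately show ?thesis
    using card_below_level[of m] card_level_filter[of m "\<lambda>j. x < j"] by (simp add: Icount_def)
qed

lemma real_card_adm_class: "real (card (adm_class (Suc n) x)) = 4 * U (n + x) x"
  by (simp add: card_adm_class U_eq)

lemma finite_aprec_below: "admissible u \<Longrightarrow> finite {v. admissible v \<and> aprec v u}"
  by (rule rev_finite_subset[OF finite_Knat_le[of "Knat u"]])
     (auto simp: aprec_def Kc_admissible)

lemma preceding_subset_aprec_below:
  assumes "u \<in> adm_class (Suc n) x"
  shows "preceding (n + x) x \<subseteq> {v. admissible v \<and> aprec v u}"
  using assms Knat_bounds unfolding preceding_def adm_class_def aprec_def
  by (auto simp: Kc_admissible Knat_def)

lemma aprec_below_subset: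
  assumes "u \<in> adm_class (Suc n) x"
  shows "{v. admissible v \<and> aprec v u} \<subseteq> preceding (n + x) x \<union> (adm_class (Suc n) x - {u})"
  using assms irreflp_aprec unfolding preceding_def adm_class_def aprec_def
  by (auto simp: Kc_admissible Knat_def dest: irreflpD)

lemma arank_bounds:
  assumes "u \<in> adm_class (Suc n) x"
  shows "card (preceding (n + x) x) \<le> arank u
    \<and> arank u < card (preceding (n + x) x) + card (adm_class (Suc n) x)"
proof
  have u: "admissible u" using assms unfolding adm_class_def by simp
  show "card (preceding (n + x) x) \<le> arank u"
    unfolding arank_def
    by (rule card_mono[OF finite_aprec_below[OF u] preceding_subset_aprec_below[OF assms]])
  have "arank u \<le> card (preceding (n + x) x \<union> (adm_class (Suc n) x - {u}))"
    unfolding arank_def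
    by (rule card_mono[OF _ aprec_below_subset[OF assms]]) (simp add: finite_preceding finite_adm_class)
  also have "\<dots> \<le> card (preceding (n + x) x) + card (adm_class (Suc n) x - {u})"
    by (rule card_Un_le)
  also have "card (adm_class (Suc n) x - {u}) = card (adm_class (Suc n) x) - 1"
    using assms finite_adm_class by (simp add: card_Diff_singleton)
  finally have "arank u \<le> card (preceding (n + x) x) + (card (adm_class (Suc n) x) - 1)" .
  moreover have "card (adm_class (Suc n) x) > 0"
    using assms finite_adm_class card_gt_0_iff by blast
  ultimately show "arank u < card (preceding (n + x) x) + card (adm_class (Suc n) x)"
    by linarith
qed

lemma inj_on_arank: "inj_on arank (adm_class n x)"
  unfolding arank_def
  by (rule inj_on_rank[OF transp_aprec irreflp_aprec])
     (auto intro: totalp_on_subset[OF totalp_aprec] finite_aprec_below simp: adm_class_def)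

lemma arank_image:
  "arank ` adm_class (Suc n) x
    = {card (preceding (n + x) x) ..< card (preceding (n + x) x) + card (adm_class (Suc n) x)}"
  by (rule card_subset_eq)
     (use arank_bounds in \<open>auto simp: card_image[OF inj_on_arank]\<close>)

lemma sum_seq_prob_adm_class:
  "(\<Sum>u | length u = Suc n \<and> Xcount u = x \<and> P u. seq_prob u)
    = (1/2) ^ (n + x + 2) * real (card {u \<in> adm_class (Suc n) x. P u})"
proof -
  let ?A = "{u. length u = Suc n \<and> Xcount u = x \<and> P u}"
  have fin: "finite ?A" by (rule rev_finite_subset[OF finite_length_eq]) auto
  have "(\<Sum>u\<in>?A. seq_prob u) = (\<Sum>u\<in>?A. if admissible u then (1/2) ^ (n + x + 2) else 0)"
    by (rule sum.cong) (auto simp: seq_prob_admissible Knat_def intro!: seq_prob_not_admissible)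
  also have "\<dots> = (\<Sum>u\<in>{u \<in> ?A. admissible u}. (1/2) ^ (n + x + 2))"
    by (rule sum.inter_filter[OF fin, symmetric])
  also have "{u \<in> ?A. admissible u} = {u \<in> adm_class (Suc n) x. P u}"
    by (auto simp: adm_class_def)
  finally show ?thesis by simp
qed

lemma g_eq_card_ratio:
  "g (Suc n) x = real (card {u \<in> adm_class (Suc n) x. Iev u}) / real (card (adm_class (Suc n) x))"
proof -
  have total: "(\<Sum>u | length u = Suc n \<and> Xcount u = x. seq_prob u)
      = (1/2) ^ (n + x + 2) * real (card (adm_class (Suc n) x))"
    using sum_seq_prob_adm_class[of n x "\<lambda>_. True"] by simp
  show ?thesis
    unfolding g_def sum_seq_prob_adm_class total by simp
qed

lemma card_Iev_adm_class:
  assumes "n + x = m"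
  shows "card {u \<in> adm_class (Suc n) x. Iev u}
    = min (card (adm_class (Suc n) x)) (2 ^ (m + 2) - (card (preceding m x) + 2))"
proof -
  let ?C = "adm_class (Suc n) x"
  let ?b = "card (preceding m x)"
  have "Icount m x \<le> 2 ^ Suc m"
    using Usum_le[of m] Utail_nonneg[of m "Suc x"] unfolding Icount_def by simp
  then have "real (2 ^ Suc m) \<le> real (?b + 2)"
    using card_preceding[of m x] by simp
  then have low: "2 ^ Suc m \<le> ?b + 2"
    by (simp only: of_nat_le_iff)
  have "Iev u \<longleftrightarrow> arank u + 2 < 2 ^ (m + 2)" if "u \<in> ?C" for u
  proof -
    have "admissible u" "Knat u = m + 2"
      using that assms unfolding adm_class_def Knat_def by auto
    moreover have "2 ^ Suc m \<le> arank u + 2"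
      using low arank_bounds[OF that] assms by simp
    ultimately show ?thesis by (simp add: Iev_iff)
  qed
  then have "{u \<in> ?C. Iev u} = {u \<in> ?C. arank u + 2 < 2 ^ (m + 2)}" by blast
  moreover have "card {u \<in> ?C. arank u + 2 < 2 ^ (m + 2)} = card (arank ` {u \<in> ?C. arank u + 2 < 2 ^ (m + 2)})"
    by (rule card_image[symmetric]) (rule inj_on_subset[OF inj_on_arank], auto)
  moreover have "arank ` {u \<in> ?C. arank u + 2 < 2 ^ (m + 2)} = {r \<in> arank ` ?C. r + 2 < 2 ^ (m + 2)}"
    by auto
  moreover have "{r \<in> arank ` ?C. r + 2 < 2 ^ (m + 2)} = {?b ..< ?b + min (card ?C) (2 ^ (m + 2) - (?b + 2))}"
    unfolding arank_image assms by auto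
  ultimately show ?thesis by simp
qed

lemma g_eq_Icount:
  assumes "n + x = m" "0 \<le> Icount m x" "Icount m x \<le> 4 * U m x"
  shows "g (Suc n) x = Icount m x / (4 * U m x)"
proof -
  have "real (card (preceding m x) + 2) \<le> real (2 ^ (m + 2))"
    using card_preceding[of m x] assms(2) by simp
  then have "real (2 ^ (m + 2) - (card (preceding m x) + 2)) = Icount m x"
    using card_preceding[of m x] by (simp only: of_nat_diff of_nat_le_iff) simp
  then show ?thesis
    using g_eq_card_ratio[of n x] card_Iev_adm_class[OF assms(1)] real_card_adm_class[of n x] assms
    by (simp add: min_def)
qed

theorem mainTheorem11:
  fixes t :: nat
  assumes "t \<ge> 1"
  shows "g (2 * t + 1) t = 1/2 + Dt t / (2 * Ct t)
       \<and> g (2 * t) t = 1 - Dt t / Ct t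
       \<and> g (2 * t) (t - 1) = 2 * Dt t / Ct t
       \<and> g (2 * t) (t - 1) + g (2 * t) t = 1 + Dt t / Ct t"
proof -
  obtain s where t: "t = Suc s" using assms by (cases t) auto
  then have n: "2 * t + 1 = Suc (2 * s + 2)" "2 * t = Suc (2 * s + 1)" "t - 1 = s"
    and m: "3 * t = 3 * s + 3" by simp_all
  have C: "Ct t > 0" unfolding Ct_def by simp
  have D: "0 \<le> Dt t" "2 * Dt t \<le> Ct t" using Dt_bounds[of s] t by auto
  have U: "4 * U (3 * s + 3) t = 4 * Ct t" "4 * U (3 * s + 2) t = 2 * Ct t" "4 * U (3 * s + 1) s = Ct t"
    using Ct_eq_U[of t] Ct_Suc[of s, folded t] U_central[of s, folded t] m by simp_all
  note I = Icount_central[of s, folded t]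
  have "g (2 * t + 1) t = (2 * Ct t + 2 * Dt t) / (4 * Ct t)"
    unfolding n using g_eq_Icount[of "2 * s + 2" t "3 * s + 3"] I(1) U(1) C D t by simp
  moreover have "g (2 * t) t = (2 * Ct t - 2 * Dt t) / (2 * Ct t)"
    unfolding n using g_eq_Icount[of "2 * s + 1" t "3 * s + 2"] I(2) U(2) C D t by simp
  moreover have "g (2 * t) (t - 1) = 2 * Dt t / Ct t"
    unfolding n using g_eq_Icount[of "2 * s + 1" s "3 * s + 1"] I(3) U(3) C D by simp
  ultimately show ?thesis using C by (simp add: field_simps)
qed

end
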